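(* Let $(X,d)$ be a compact metric space, $\mathbb{F}=\{f_n:n\in\mathbb{N}\}$ a sequence of continuous surjective self-maps of $X$, and $k\in\mathbb{N}$. If $(X,\mathbb{F})$ is weakly mixing (resp. topologically mixing) then $(X,\mathbb{F}_k)$ is weakly mixing (resp. topologically mixing). If the family $\mathbb{F}$ is feeble open, then $(X,\mathbb{F}_k)$ weakly mixing (resp. topologically mixing) implies $(X,\mathbb{F})$ weakly mixing (resp. topologically mixing).
   Context: Write $\omega_n=f_n\circ\cdots\circ f_1$ and, for $n>k$, $\omega^k_n=f_n\circ\cdots\circ f_{k+1}$; $\mathbb{F}_k=\{f_n:n\ge k+1\}$ is the truncated family, whose $n$-th composition ($n>k$) is $\omega^k_n$. $(X,\mathbb{F})$ is weakly mixing if for any non-empty open $U_1,U_2,V_1,V_2\subseteq X$ there is $n\in\mathbb{N}$ with $\omega_n(U_i)\cap V_i\neq\emptyset$ for $i=1,2$. $(X,\mathbb{F})$ is topologically mixing if for every pair of non-empty open $U,V$ there is $K$ with $\omega_n(U)\cap V\neq\emptyset$ for all $n\ge K$. The same notions for $(X,\mathbb{F}_k)$ use $\omega^k_n$ in place of $\omega_n$. $\mathbb{F}$ is feeble open if for every non-empty open $U$ and every $f\in\mathbb{F}$, $f(U)$ has non-empty interior. *)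

theory Defs
  imports "HOL-Analysis.Analysis"
begin

text \<open>Maps are indexed from 1: f 1, f 2, ...  (f 0 is never used).
  omega f k n = f n o ... o f (k+1) for n > k (identity otherwise);
  omega f 0 n is the n-th composition of the family.\<close>

fun omega :: "(nat \<Rightarrow> 'a \<Rightarrow> 'a) \<Rightarrow> nat \<Rightarrow> nat \<Rightarrow> 'a \<Rightarrow> 'a" where
  "omega f k 0 = id"
| "omega f k (Suc n) = (if Suc n \<le> k then id else f (Suc n) \<circ> omega f k n)"

text \<open>Weak mixing of the truncated family F_k = {f n : n >= k+1} on X
  (k = 0 gives the family F itself). Open means open in X.\<close>
definition weakly_mixing_from :: "'a::metric_space set \<Rightarrow> (nat \<Rightarrow> 'a \<Rightarrow> 'a) \<Rightarrow> nat \<Rightarrow> bool" where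
  "weakly_mixing_from X f k \<longleftrightarrow>
    (\<forall>U1 U2 V1 V2.
       openin (top_of_set X) U1 \<and> U1 \<noteq> {} \<and> openin (top_of_set X) U2 \<and> U2 \<noteq> {} \<and>
       openin (top_of_set X) V1 \<and> V1 \<noteq> {} \<and> openin (top_of_set X) V2 \<and> V2 \<noteq> {} \<longrightarrow>
       (\<exists>n>k. omega f k n ` U1 \<inter> V1 \<noteq> {} \<and> omega f k n ` U2 \<inter> V2 \<noteq> {}))"

definition topologically_mixing_from :: "'a::metric_space set \<Rightarrow> (nat \<Rightarrow> 'a \<Rightarrow> 'a) \<Rightarrow> nat \<Rightarrow> bool" where
  "topologically_mixing_from X f k \<longleftrightarrow>
    (\<forall>U V. openin (top_of_set X) U \<and> U \<noteq> {} \<and> openin (top_of_set X) V \<and> V \<noteq> {} \<longrightarrow>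
       (\<exists>K. \<forall>n\<ge>K. n > k \<longrightarrow> omega f k n ` U \<inter> V \<noteq> {}))"

definition feeble_open :: "'a::metric_space set \<Rightarrow> (nat \<Rightarrow> 'a \<Rightarrow> 'a) \<Rightarrow> bool" where
  "feeble_open X f \<longleftrightarrow>
    (\<forall>U n. openin (top_of_set X) U \<and> U \<noteq> {} \<and> n \<ge> 1 \<longrightarrow>
       (top_of_set X) interior_of (f n ` U) \<noteq> {})"

end

theory Submission
  imports Defs
begin

text \<open>Passing from \<open>\<F>\<close> to \<open>\<F>\<^sub>k\<close> amounts to replacing \<open>\<omega>\<^sub>n = \<omega>\<^sup>k\<^sub>n \<circ> \<omega>\<^sub>k\<close> by \<open>\<omega>\<^sup>k\<^sub>n\<close>.
  Since \<open>\<omega>\<^sub>k\<close> is a continuous surjection, an open set \<open>U\<close> is the image of the open set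
  \<open>\<omega>\<^sub>k\<^sup>-\<^sup>1(U)\<close>, so every time at which \<open>\<F>\<close> mixes the preimages is a time at which \<open>\<F>\<^sub>k\<close>
  mixes the original sets; the only issue is to find such a time beyond \<open>k\<close>. Unless \<open>X\<close>
  is a single point, no open set is a singleton, and one can shrink \<open>U\<^sub>1, V\<^sub>1\<close> so that
  \<open>\<omega>\<^sub>m(U\<^sub>1) \<inter> V\<^sub>1 = \<emptyset>\<close> for a given \<open>m\<close>; by induction on \<open>k\<close> this excludes all times \<open>\<le> k\<close>.
  Conversely, for a feeble open family \<open>\<omega>\<^sub>k(U)\<close> has nonempty interior \<open>W\<close>, and
  \<open>\<omega>\<^sup>k\<^sub>n(W) \<subseteq> \<omega>\<^sub>n(U)\<close>, so mixing of \<open>\<F>\<^sub>k\<close> transfers to \<open>\<F>\<close>.\<close>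

lemma omega_eq_id: "n \<le> k \<Longrightarrow> omega f k n = id"
  by (induction n) auto

lemma omega_split: "j \<le> k \<Longrightarrow> k \<le> n \<Longrightarrow> omega f j n = omega f k n \<circ> omega f j k"
proof (induction n)
  case 0
  then show ?case by simp
next
  case (Suc n)
  show ?case
  proof (cases "k = Suc n")
    case True
    then show ?thesis by (simp add: omega_eq_id)
  next
    case False
    with Suc show ?thesis by (simp add: comp_assoc)
  qed
qed

lemma image_omega_split:
  "j \<le> k \<Longrightarrow> k \<le> n \<Longrightarrow> omega f j n ` S = omega f k n ` omega f j k ` S"
  by (simp add: omega_split[of j k n f] image_comp)

lemma image_omega_eq:
  assumes "\<And>n. n \<ge> 1 \<Longrightarrow> f n ` X = X"
  shows "omega f k n ` X = X"
proof (induction n)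
  case 0
  then show ?case by simp
next
  case (Suc n)
  then have "f (Suc n) ` omega f k n ` X = X" if "Suc n > k"
    using that assms by simp
  then show ?case by (simp add: image_image)
qed

lemma continuous_on_omega:
  assumes "\<And>n. n \<ge> 1 \<Longrightarrow> continuous_on X (f n)"
    and "\<And>n. n \<ge> 1 \<Longrightarrow> f n ` X = X"
  shows "continuous_on X (omega f k n)"
proof (induction n)
  case 0
  then show ?case by simp
next
  case (Suc n)
  have "continuous_on X (f (Suc n) \<circ> omega f k n)"
    using Suc assms image_omega_eq[where f=f and k=k and n=n, OF assms(2)]
    by (intro continuous_on_compose) auto
  then show ?case by simp
qed

lemma openin_preimage_surjective:
  assumes "continuous_on X g" "g ` X = X" "openin (top_of_set X) U"
  shows "openin (top_of_set X) (X \<inter> g -` U)" and "g ` (X \<inter> g -` U) = U"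
proof -
  show "openin (top_of_set X) (X \<inter> g -` U)"
    using assms by (intro continuous_openin_preimage[of X g X]) auto
  have "U \<subseteq> X"
    using assms(3) by (rule openin_imp_subset)
  show "g ` (X \<inter> g -` U) = U"
  proof
    show "U \<subseteq> g ` (X \<inter> g -` U)"
    proof
      fix y
      assume "y \<in> U"
      then obtain x where "x \<in> X" "y = g x"
        using \<open>U \<subseteq> X\<close> assms(2) by blast
      with \<open>y \<in> U\<close> show "y \<in> g ` (X \<inter> g -` U)"
        by blast
    qed
  qed blast
qed

lemma openin_disjoint_image_subsets:
  fixes X :: "'a::t2_space set"
  assumes "continuous_on X g"
    and U: "openin (top_of_set X) U" "U \<noteq> {}"
    and V: "openin (top_of_set X) V" "\<And>q. V \<noteq> {q}" "V \<noteq> {}"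
  obtains U' V' where "openin (top_of_set X) U'" "U' \<noteq> {}" "U' \<subseteq> U"
    "openin (top_of_set X) V'" "V' \<noteq> {}" "V' \<subseteq> V" "g ` U' \<inter> V' = {}"
proof -
  obtain x where x: "x \<in> U"
    using U by auto
  obtain y where y: "y \<in> V" "y \<noteq> g x"
    using V(2)[of "g x"] V(3) by blast
  obtain A B where AB: "open A" "open B" "g x \<in> A" "y \<in> B" "A \<inter> B = {}"
    using separation_t2[of "g x" y] y(2) by metis
  have "x \<in> X" "y \<in> X"
    using x y U(1) V(1) openin_imp_subset by blast+
  show ?thesis
  proof (rule that)
    show "openin (top_of_set X) (U \<inter> (X \<inter> g -` A))"
      using U(1) continuous_openin_preimage_gen[OF assms(1) AB(1)] by (rule openin_Int)
    show "openin (top_of_set X) (V \<inter> (X \<inter> B))"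
      using V(1) openin_open_Int[OF AB(2)] by (rule openin_Int)
    show "U \<inter> (X \<inter> g -` A) \<noteq> {}"
      using x \<open>x \<in> X\<close> AB(3) by blast
    show "V \<inter> (X \<inter> B) \<noteq> {}"
      using y \<open>y \<in> X\<close> AB(4) by blast
    show "g ` (U \<inter> (X \<inter> g -` A)) \<inter> (V \<inter> (X \<inter> B)) = {}"
      using AB(5) by blast
  qed auto
qed

lemma weakly_mixing_open_singleton:
  fixes X :: "'a::metric_space set"
  assumes wm: "weakly_mixing_from X f k" and q: "openin (top_of_set X) {q}"
  shows "X = {q}"
proof (rule ccontr)
  assume "X \<noteq> {q}"
  moreover have "q \<in> X"
    using q openin_imp_subset by blast
  ultimately obtain z where z: "z \<in> X" "z \<noteq> q"
    by blast
  define V where "V = X \<inter> ball z (dist z q)"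
  have "openin (top_of_set X) V" "z \<in> V" "q \<notin> V"
    using z by (auto simp: V_def dist_commute)
  then obtain n where "omega f k n ` {q} \<inter> {q} \<noteq> {}" "omega f k n ` {q} \<inter> V \<noteq> {}"
    using wm q unfolding weakly_mixing_from_def by (metis empty_iff insert_not_empty)
  with \<open>q \<notin> V\<close> show False
    by auto
qed

lemma weakly_mixing_from_0_late_times:
  fixes X :: "'a::metric_space set"
  assumes wm: "weakly_mixing_from X f 0"
    and cont: "\<And>n. n \<ge> 1 \<Longrightarrow> continuous_on X (f n)"
    and surj: "\<And>n. n \<ge> 1 \<Longrightarrow> f n ` X = X"
    and U1: "openin (top_of_set X) U1" "U1 \<noteq> {}"
    and U2: "openin (top_of_set X) U2" "U2 \<noteq> {}"
    and V1: "openin (top_of_set X) V1" "V1 \<noteq> {}"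
    and V2: "openin (top_of_set X) V2" "V2 \<noteq> {}"
  shows "\<exists>n>k. omega f 0 n ` U1 \<inter> V1 \<noteq> {} \<and> omega f 0 n ` U2 \<inter> V2 \<noteq> {}"
  using U1 V1
proof (induction k arbitrary: U1 V1)
  case 0
  then show ?case
    using wm U2 V2 unfolding weakly_mixing_from_def by blast
next
  case (Suc k)
  show ?case
  proof (cases "\<exists>q. V1 = {q}")
    case True
    then obtain q where "V1 = {q}"
      by blast
    then have X: "X = {q}"
      using weakly_mixing_open_singleton[OF wm] Suc.prems(3) by blast
    then have "S = X" if "openin (top_of_set X) S" "S \<noteq> {}" for S
      using that openin_imp_subset by blast
    then have "U1 = X" "U2 = X" "V1 = X" "V2 = X"
      using Suc.prems U2 V2 by auto
    moreover have "omega f 0 (Suc (Suc k)) ` X = X"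
      by (rule image_omega_eq[OF surj])
    ultimately show ?thesis
      using X by (intro exI[of _ "Suc (Suc k)"]) simp
  next
    case False
    then have "\<And>q. V1 \<noteq> {q}"
      by blast
    with Suc.prems obtain U' V' where UV: "openin (top_of_set X) U'" "U' \<noteq> {}" "U' \<subseteq> U1"
      "openin (top_of_set X) V'" "V' \<noteq> {}" "V' \<subseteq> V1" "omega f 0 (Suc k) ` U' \<inter> V' = {}"
      using openin_disjoint_image_subsets[OF continuous_on_omega[where f=f, OF cont surj]]
      by metis
    obtain n where n: "n > k" "omega f 0 n ` U' \<inter> V' \<noteq> {}" "omega f 0 n ` U2 \<inter> V2 \<noteq> {}"
      using Suc.IH[OF UV(1,2,4,5)] by blast
    have "n \<noteq> Suc k"
      using n(2) UV(7) by auto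
    with n(1) have "n > Suc k"
      by simp
    moreover have "omega f 0 n ` U1 \<inter> V1 \<noteq> {}"
      using n(2) UV(3,6) by blast
    ultimately show ?thesis
      using n(3) by blast
  qed
qed

lemma omega_preimage:
  assumes cont: "\<And>n. n \<ge> 1 \<Longrightarrow> continuous_on X (f n)"
    and surj: "\<And>n. n \<ge> 1 \<Longrightarrow> f n ` X = X"
    and U: "openin (top_of_set X) U" "U \<noteq> {}"
  shows "openin (top_of_set X) (X \<inter> omega f 0 k -` U)"
    and "X \<inter> omega f 0 k -` U \<noteq> {}"
    and "k \<le> n \<Longrightarrow> omega f 0 n ` (X \<inter> omega f 0 k -` U) = omega f k n ` U"
proof -
  note preimage = openin_preimage_surjective
    [OF continuous_on_omega[where f=f and k=0 and n=k, OF cont surj]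
        image_omega_eq[where f=f and k=0 and n=k, OF surj] U(1)]
  show "openin (top_of_set X) (X \<inter> omega f 0 k -` U)"
    by (rule preimage(1))
  show "X \<inter> omega f 0 k -` U \<noteq> {}"
    using preimage(2) U(2) by auto
  show "omega f 0 n ` (X \<inter> omega f 0 k -` U) = omega f k n ` U" if "k \<le> n"
    using image_omega_split[of 0 k n f "X \<inter> omega f 0 k -` U"] that preimage(2) by simp
qed

lemma feeble_open_interior_of_image_omega:
  assumes fo: "feeble_open X f" and U: "openin (top_of_set X) U" "U \<noteq> {}"
  shows "(top_of_set X) interior_of (omega f k j ` U) \<noteq> {}"
proof (induction j)
  case 0
  then show ?case using U by (simp add: interior_of_openin)
next
  case (Suc j)
  show ?case
  proof (cases "Suc j \<le> k")
    case True
    then show ?thesis using U by (simp add: interior_of_openin)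
  next
    case False
    define W where "W = (top_of_set X) interior_of (omega f k j ` U)"
    have "openin (top_of_set X) W" "W \<noteq> {}"
      using Suc by (auto simp: W_def)
    then have "(top_of_set X) interior_of (f (Suc j) ` W) \<noteq> {}"
      using fo unfolding feeble_open_def by auto
    moreover have "f (Suc j) ` W \<subseteq> omega f k (Suc j) ` U"
      using False interior_of_subset[of "top_of_set X" "omega f k j ` U"] by (auto simp: W_def)
    ultimately show ?thesis
      using interior_of_mono by blast
  qed
qed

lemma weakly_mixing_from_0_imp_weakly_mixing_from:
  fixes X :: "'a::metric_space set"
  assumes wm: "weakly_mixing_from X f 0"
    and cont: "\<And>n. n \<ge> 1 \<Longrightarrow> continuous_on X (f n)"
    and surj: "\<And>n. n \<ge> 1 \<Longrightarrow> f n ` X = X"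
  shows "weakly_mixing_from X f k"
  unfolding weakly_mixing_from_def
proof (intro allI impI, elim conjE)
  fix U1 U2 V1 V2
  assume U1: "openin (top_of_set X) U1" "U1 \<noteq> {}" and U2: "openin (top_of_set X) U2" "U2 \<noteq> {}"
    and V: "openin (top_of_set X) V1" "V1 \<noteq> {}" "openin (top_of_set X) V2" "V2 \<noteq> {}"
  note P1 = omega_preimage[where f=f and k=k, OF cont surj U1]
    and P2 = omega_preimage[where f=f and k=k, OF cont surj U2]
  obtain n where n: "n > k"
    "omega f 0 n ` (X \<inter> omega f 0 k -` U1) \<inter> V1 \<noteq> {}"
    "omega f 0 n ` (X \<inter> omega f 0 k -` U2) \<inter> V2 \<noteq> {}"
    using weakly_mixing_from_0_late_times[OF wm cont surj P1(1,2) P2(1,2) V] by blast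
  moreover have "omega f 0 n ` (X \<inter> omega f 0 k -` U1) = omega f k n ` U1"
    "omega f 0 n ` (X \<inter> omega f 0 k -` U2) = omega f k n ` U2"
    using n(1) P1(3) P2(3) by simp_all
  ultimately show "\<exists>n>k. omega f k n ` U1 \<inter> V1 \<noteq> {} \<and> omega f k n ` U2 \<inter> V2 \<noteq> {}"
    by (intro exI[of _ n]) simp
qed

lemma topologically_mixing_from_0_imp_topologically_mixing_from:
  assumes tm: "topologically_mixing_from X f 0"
    and cont: "\<And>n. n \<ge> 1 \<Longrightarrow> continuous_on X (f n)"
    and surj: "\<And>n. n \<ge> 1 \<Longrightarrow> f n ` X = X"
  shows "topologically_mixing_from X f k"
  unfolding topologically_mixing_from_def
proof (intro allI impI, elim conjE)
  fix U V
  assume U: "openin (top_of_set X) U" "U \<noteq> {}" and V: "openin (top_of_set X) V" "V \<noteq> {}"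
  note P = omega_preimage[where f=f and k=k, OF cont surj U]
  obtain K where K: "\<forall>n\<ge>K. n > 0 \<longrightarrow> omega f 0 n ` (X \<inter> omega f 0 k -` U) \<inter> V \<noteq> {}"
    using tm P(1,2) V unfolding topologically_mixing_from_def by blast
  have "omega f k n ` U \<inter> V \<noteq> {}" if "n \<ge> K" "n > k" for n
    using K P(3)[of n] that by auto
  then show "\<exists>K. \<forall>n\<ge>K. n > k \<longrightarrow> omega f k n ` U \<inter> V \<noteq> {}"
    by (intro exI[of _ K]) blast
qed

lemma image_omega_interior_of_subset:
  "k \<le> n \<Longrightarrow> omega f k n ` (T interior_of (omega f 0 k ` U)) \<subseteq> omega f 0 n ` U"
  using image_omega_split[of 0 k n f U] interior_of_subset[of T "omega f 0 k ` U"] by auto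

lemma weakly_mixing_from_imp_weakly_mixing_from_0:
  assumes fo: "feeble_open X f" and wm: "weakly_mixing_from X f k"
  shows "weakly_mixing_from X f 0"
  unfolding weakly_mixing_from_def
proof (intro allI impI, elim conjE)
  fix U1 U2 V1 V2
  assume U1: "openin (top_of_set X) U1" "U1 \<noteq> {}" and U2: "openin (top_of_set X) U2" "U2 \<noteq> {}"
    and V: "openin (top_of_set X) V1" "V1 \<noteq> {}" "openin (top_of_set X) V2" "V2 \<noteq> {}"
  define W1 W2 where "W1 = (top_of_set X) interior_of (omega f 0 k ` U1)"
    and "W2 = (top_of_set X) interior_of (omega f 0 k ` U2)"
  have "openin (top_of_set X) W1" "W1 \<noteq> {}" "openin (top_of_set X) W2" "W2 \<noteq> {}"
    using feeble_open_interior_of_image_omega[OF fo] U1 U2 by (simp_all add: W1_def W2_def)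
  then obtain n where n: "n > k" "omega f k n ` W1 \<inter> V1 \<noteq> {}" "omega f k n ` W2 \<inter> V2 \<noteq> {}"
    using wm[unfolded weakly_mixing_from_def, rule_format, of W1 W2 V1 V2] V by blast
  moreover have "omega f k n ` W1 \<subseteq> omega f 0 n ` U1" "omega f k n ` W2 \<subseteq> omega f 0 n ` U2"
    using n(1) image_omega_interior_of_subset[of k n f] by (simp_all add: W1_def W2_def)
  ultimately have "omega f 0 n ` U1 \<inter> V1 \<noteq> {}" "omega f 0 n ` U2 \<inter> V2 \<noteq> {}"
    by blast+
  with n(1) show "\<exists>n>0. omega f 0 n ` U1 \<inter> V1 \<noteq> {} \<and> omega f 0 n ` U2 \<inter> V2 \<noteq> {}"
    by (intro exI[of _ n]) simp
qed

lemma topologically_mixing_from_imp_topologically_mixing_from_0: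
  assumes fo: "feeble_open X f" and tm: "topologically_mixing_from X f k"
  shows "topologically_mixing_from X f 0"
  unfolding topologically_mixing_from_def
proof (intro allI impI, elim conjE)
  fix U V
  assume U: "openin (top_of_set X) U" "U \<noteq> {}" and V: "openin (top_of_set X) V" "V \<noteq> {}"
  define W where "W = (top_of_set X) interior_of (omega f 0 k ` U)"
  have "openin (top_of_set X) W" "W \<noteq> {}"
    using feeble_open_interior_of_image_omega[OF fo U] by (simp_all add: W_def)
  then obtain K where K: "\<forall>n\<ge>K. n > k \<longrightarrow> omega f k n ` W \<inter> V \<noteq> {}"
    using tm V unfolding topologically_mixing_from_def by blast
  have "omega f 0 n ` U \<inter> V \<noteq> {}" if "n \<ge> max K (Suc k)" for n
  proof -
    have "omega f k n ` W \<subseteq> omega f 0 n ` U"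
      using that image_omega_interior_of_subset[of k n f] by (simp add: W_def)
    moreover have "omega f k n ` W \<inter> V \<noteq> {}"
      using K that by simp
    ultimately show ?thesis
      by blast
  qed
  then show "\<exists>K. \<forall>n\<ge>K. n > 0 \<longrightarrow> omega f 0 n ` U \<inter> V \<noteq> {}"
    by (intro exI[of _ "max K (Suc k)"]) blast
qed

theorem mainTheorem5:
  fixes X :: "'a::metric_space set" and f :: "nat \<Rightarrow> 'a \<Rightarrow> 'a" and k :: nat
  assumes "compact X"
    and "\<And>n. n \<ge> 1 \<Longrightarrow> continuous_on X (f n)"
    and "\<And>n. n \<ge> 1 \<Longrightarrow> f n ` X = X"
  shows "(weakly_mixing_from X f 0 \<longrightarrow> weakly_mixing_from X f k)
       \<and> (topologically_mixing_from X f 0 \<longrightarrow> topologically_mixing_from X f k)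
       \<and> (feeble_open X f \<longrightarrow>
            (weakly_mixing_from X f k \<longrightarrow> weakly_mixing_from X f 0)
          \<and> (topologically_mixing_from X f k \<longrightarrow> topologically_mixing_from X f 0))"
proof (intro conjI impI)
  show "weakly_mixing_from X f k" if "weakly_mixing_from X f 0"
    using that assms(2,3) by (rule weakly_mixing_from_0_imp_weakly_mixing_from)
  show "topologically_mixing_from X f k" if "topologically_mixing_from X f 0"
    using that assms(2,3) by (rule topologically_mixing_from_0_imp_topologically_mixing_from)
  show "weakly_mixing_from X f 0" if "feeble_open X f" "weakly_mixing_from X f k"
    using that by (rule weakly_mixing_from_imp_weakly_mixing_from_0)
  show "topologically_mixing_from X f 0" if "feeble_open X f" "topologically_mixing_from X f k"
    using that by (rule topologically_mixing_from_imp_topologically_mixing_from_0)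
qed

end
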